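(* (1) Let $S$ be a nonempty subset of $\mathbb{Z}$ and let $\mathcal{T}_1\subseteq\mathcal{T}_2\subseteq\mathbb{N}$. Then for all integers $0\le k<|S|$, $k!_{S,\mathcal{T}_1}$ divides $k!_{S,\mathcal{T}_2}$. (2) Let $S_1\subseteq S_2$ be nonempty subsets of $\mathbb{Z}$ and let $\mathcal{T}\subseteq\mathbb{N}$. Then for all integers $0\le k<|S_1|$, $k!_{S_2,\mathcal{T}}$ divides $k!_{S_1,\mathcal{T}}$.
   Context: $\mathbb{N}=\{0,1,2,\dots\}$. For an integer $b\ge0$ and $a\in\mathbb{Z}$ define $\operatorname{ord}_b(a):=\sup\{k\in\mathbb{N}: a\mathbb{Z}\subseteq b^k\mathbb{Z}\}$ (convention $0^0=1$); thus for $b\ge2$ it is the largest $k$ with $b^k\mid a$ ($+\infty$ for $a=0$), $\operatorname{ord}_0(a)=+\infty$ if $a=0$ and $0$ otherwise, and $\operatorname{ord}_1(a)=+\infty$. For nonempty $S\subseteq\mathbb{Z}$, a $b$-ordering of $S$ is a sequence $(a_i)_{i\ge0}$ in $S$ such that for each $i\ge1$, $a_i$ attains $\min_{a'\in S}\sum_{j=0}^{i-1}\operatorname{ord}_b(a'-a_j)$; the $b$-exponent sequence is $\alpha_k(S,b):=\sum_{j=0}^{k-1}\operatorname{ord}_b(a_k-a_j)$ for any $b$-ordering (independent of the choice). For $\mathcal{T}\subseteq\mathbb{N}$ the generalized factorial is $k!_{S,\mathcal{T}}:=\prod_{b\in\mathcal{T}}b^{\alpha_k(S,b)}$, with conventions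 $b^{+\infty}=0$ for $b=0$ and $b\ge2$, $1^{+\infty}=1$, and $b^0=1$ for all $b\in\mathbb{N}$. *)

theory Defs
  imports Main "HOL-Library.Extended_Nat"
begin

text \<open>ord_b(a) = sup of k such that a Z is contained in b^k Z, i.e. b^k divides a
  (with 0^0 = 1); the supremum is taken in the extended naturals.\<close>
definition ordb :: "nat \<Rightarrow> int \<Rightarrow> enat" where
  "ordb b a = Sup {enat k | k. (int b) ^ k dvd a}"

definition is_b_ordering :: "int set \<Rightarrow> nat \<Rightarrow> (nat \<Rightarrow> int) \<Rightarrow> bool" where
  "is_b_ordering S b a \<longleftrightarrow>
     (\<forall>i. a i \<in> S) \<and>
     (\<forall>i\<ge>1. \<forall>a'\<in>S. (\<Sum>j<i. ordb b (a i - a j)) \<le> (\<Sum>j<i. ordb b (a' - a j)))"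

text \<open>The b-exponent sequence, computed from some (any) b-ordering.\<close>
definition alpha :: "int set \<Rightarrow> nat \<Rightarrow> nat \<Rightarrow> enat" where
  "alpha S b k = (let a = (SOME a. is_b_ordering S b a) in (\<Sum>j<k. ordb b (a k - a j)))"

definition epow :: "nat \<Rightarrow> enat \<Rightarrow> nat" where
  "epow b e = (case e of enat n \<Rightarrow> b ^ n | \<infinity> \<Rightarrow> (if b = 1 then 1 else 0))"

text \<open>Generalised factorial k!_{S,T} = prod over b in T of b^{alpha_k(S,b)}, taken over the
  factors different from 1 (finitely many whenever k < |S|).\<close>
definition gfact :: "int set \<Rightarrow> nat set \<Rightarrow> nat \<Rightarrow> nat" where
  "gfact S T k = (\<Prod>b\<in>{b\<in>T. epow b (alpha S b k) \<noteq> 1}. epow b (alpha S b k))"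

end

(*
  Part (1) only needs the set of b with b^alpha_k(S,b) \<noteq> 1 to be finite: k+1 points of S are
  pairwise incongruent modulo every b exceeding their diameter, and then some of them has
  ord_b-distance 0 to each of the first k terms of a b-ordering, forcing alpha_k(S,b) = 0.

  Part (2) reduces to alpha_k(S2,b) \<le> alpha_k(S1,b) for S1 \<subseteq> S2 and b \<noteq> 1. Take the first k
  terms c_0..c_{k-1} of a b-ordering of S2 and the first k+1 terms a_0..a_k of one of S1; it
  suffices to find some a_i with sum_j ord_b(a_i - c_j) \<le> alpha_k(S1,b). This is shown for all
  finite T containing these points, by induction on the diameter and then the size of T. If T
  meets several residue classes mod b, some class r contains more of the a's than of the c's;
  points of class r only see the terms of their own class, so one recurses into that class. If T
  lies in a single class, the map x \<mapsto> (x - t)/b lowers every ord_b by one and divides the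
  diameter by b.
*)

theory Submission
  imports Defs
begin

lemma length_eq_sum_length_filter:
  assumes "finite R"
  shows "f ` set xs \<subseteq> R \<Longrightarrow> length xs = (\<Sum>r\<in>R. length (filter (\<lambda>x. f x = r) xs))"
proof (induction xs)
  case (Cons a xs)
  have "(\<Sum>r\<in>R. length (filter (\<lambda>x. f x = r) (a # xs)))
      = (\<Sum>r\<in>R. (if f a = r then 1 else 0) + length (filter (\<lambda>x. f x = r) xs))"
    by (rule sum.cong) auto
  also have "\<dots> = Suc (length xs)"
    using Cons assms by (simp add: sum.distrib)
  finally show ?case
    by simp
qed simp

lemma ex_length_filter_less:
  assumes "length xs < length ys"
  shows "\<exists>r. length (filter (\<lambda>x. f x = r) xs) < length (filter (\<lambda>x. f x = r) ys)"
proof (rule ccontr)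
  define R where "R = f ` set (xs @ ys)"
  assume "\<not> ?thesis"
  then have "(\<Sum>r\<in>R. length (filter (\<lambda>x. f x = r) ys)) \<le> (\<Sum>r\<in>R. length (filter (\<lambda>x. f x = r) xs))"
    by (intro sum_mono) (simp add: not_less)
  moreover have "finite R" "f ` set xs \<subseteq> R" "f ` set ys \<subseteq> R"
    by (auto simp: R_def)
  ultimately have "length ys \<le> length xs"
    using length_eq_sum_length_filter[of R f] by simp
  with assms show False
    by simp
qed

lemma ex_minimizer:
  fixes f :: "'a \<Rightarrow> 'b::wellorder"
  assumes "S \<noteq> {}"
  shows "\<exists>x\<in>S. \<forall>y\<in>S. f x \<le> f y"
proof -
  define m where "m = (LEAST v. v \<in> f ` S)"
  obtain x0 where "x0 \<in> S"
    using assms by blast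
  then have "m \<in> f ` S"
    unfolding m_def by (rule LeastI[of _ "f x0", OF imageI])
  moreover have "m \<le> f y" if "y \<in> S" for y
    unfolding m_def using that by (simp add: Least_le)
  ultimately show ?thesis
    by blast
qed

lemma ex_subset_card:
  assumes "finite S \<longrightarrow> n \<le> card S"
  obtains F where "F \<subseteq> S" "card F = n"
proof (cases "finite S")
  case True
  then show ?thesis
    using assms that obtain_subset_with_card_n by metis
next
  case False
  then show ?thesis
    using infinite_arbitrarily_large that by metis
qed

lemma int_set_residue_cases:
  fixes T :: "int set"
  obtains (residues) u v where "u \<in> T" "v \<in> T" "u mod int b \<noteq> v mod int b"
  | (subsingleton) c where "T \<subseteq> {c}"
  | (congruent) u v where "u \<in> T" "v \<in> T" "u \<noteq> v" "\<forall>x\<in>T. x mod int b = u mod int b"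
proof (cases "\<exists>u\<in>T. \<exists>v\<in>T. u \<noteq> v")
  case True
  then obtain u v where "u \<in> T" "v \<in> T" "u \<noteq> v"
    by blast
  then show ?thesis
    using that(1,3) by (cases "\<forall>x\<in>T. x mod int b = u mod int b") blast+
next
  case False
  then show ?thesis
    using that(2) by blast
qed

lemma finite_int_set_diameter:
  assumes "finite (T :: int set)"
  obtains n where "\<forall>x\<in>T. \<forall>y\<in>T. \<bar>x - y\<bar> \<le> int n"
proof -
  obtain M where M: "\<forall>x\<in>T. \<bar>x\<bar> \<le> M"
    using bdd_above_finite[of "abs ` T"] assms by (auto simp: bdd_above_def)
  show ?thesis
  proof (rule that[of "nat (2 * M)"], intro ballI)
    fix x y assume "x \<in> T" "y \<in> T"
    with M show "\<bar>x - y\<bar> \<le> int (nat (2 * M))"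
      by (smt (verit) int_nat_eq)
  qed
qed

lemma abs_diff_rescale_le:
  assumes "int b dvd x - c" "int b dvd y - c" "\<bar>x - y\<bar> \<le> int n"
  shows "\<bar>(x - c) div int b - (y - c) div int b\<bar> \<le> int (n div b)"
proof (cases "b = 0")
  case False
  obtain p q where pq: "x - c = int b * p" "y - c = int b * q"
    using assms(1,2) by (elim dvdE)
  then have "x - y = int b * (p - q)"
    by (simp add: algebra_simps)
  with pq False have "\<bar>(x - c) div int b - (y - c) div int b\<bar> = \<bar>x - y\<bar> div int b"
    by (simp add: abs_mult)
  also have "\<dots> \<le> int n div int b"
    using assms(3) by (rule zdiv_mono1) (use False in simp)
  finally show ?thesis
    by (simp add: zdiv_int)
qed simp

lemma prod_nontrivial_dvd:
  fixes f g :: "'a \<Rightarrow> nat"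
  assumes "T \<subseteq> T'" "finite {x\<in>T'. g x \<noteq> 1}" "\<And>x. x \<in> T \<Longrightarrow> f x dvd g x"
  shows "(\<Prod>x\<in>{x\<in>T. f x \<noteq> 1}. f x) dvd (\<Prod>x\<in>{x\<in>T'. g x \<noteq> 1}. g x)"
proof -
  have "{x\<in>T. f x \<noteq> 1} \<subseteq> {x\<in>T'. g x \<noteq> 1}"
    using assms(1,3) by fastforce
  have "(\<Prod>x\<in>{x\<in>T. f x \<noteq> 1}. f x) dvd (\<Prod>x\<in>{x\<in>T. f x \<noteq> 1}. g x)"
    using assms(3) by (auto intro: prod_dvd_prod)
  also have "\<dots> dvd (\<Prod>x\<in>{x\<in>T'. g x \<noteq> 1}. g x)"
    by (rule prod_dvd_prod_subset[OF assms(2)]) fact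
  finally show ?thesis .
qed

section \<open>Finite b-ordered lists\<close>

lemma ordb_eq_0_iff: "ordb b a = 0 \<longleftrightarrow> \<not> int b dvd a"
proof -
  have "ordb b a = 0 \<longleftrightarrow> (\<forall>k. int b ^ k dvd a \<longrightarrow> k = 0)"
    using Sup_bot_conv(1)[of "{enat k | k. int b ^ k dvd a}"]
    by (auto simp: ordb_def bot_enat_def zero_enat_def)
  also have "\<dots> \<longleftrightarrow> \<not> int b dvd a"
    by (metis dvd_power dvd_trans not_gr0 one_neq_zero power_one_right)
  finally show ?thesis .
qed

lemma ordb_mult_self:
  assumes "b \<noteq> 0"
  shows "ordb b (int b * a) = eSuc (ordb b a)"
proof -
  define K where "K = {k. int b ^ k dvd a}"
  have dvd_Suc_iff: "int b ^ Suc k dvd int b * a \<longleftrightarrow> int b ^ k dvd a" for k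
    using assms by simp
  have "{k. int b ^ k dvd int b * a} = insert 0 (Suc ` K)"
    unfolding K_def by (auto simp: image_iff) (metis dvd_Suc_iff not0_implies_Suc)
  then have "{enat k | k. int b ^ k dvd int b * a} = insert 0 (eSuc ` enat ` K)"
    by (auto simp: image_image eSuc_enat zero_enat_def)
  moreover have "{enat k | k. int b ^ k dvd a} = enat ` K"
    by (auto simp: K_def)
  moreover have "K \<noteq> {}"
    by (auto simp: K_def intro: exI[of _ 0])
  ultimately show ?thesis
    unfolding ordb_def by (simp add: eSuc_Sup sup_enat_def)
qed

definition ordb_sum :: "nat \<Rightarrow> int list \<Rightarrow> int \<Rightarrow> enat" where
  "ordb_sum b L y = (\<Sum>x\<leftarrow>L. ordb b (y - x))"

lemma ordb_sum_Nil [simp]: "ordb_sum b [] y = 0"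
  by (simp add: ordb_sum_def)

lemma ordb_sum_Cons [simp]: "ordb_sum b (x # L) y = ordb b (y - x) + ordb_sum b L y"
  by (simp add: ordb_sum_def)

lemma ordb_sum_append [simp]: "ordb_sum b (L @ M) y = ordb_sum b L y + ordb_sum b M y"
  by (simp add: ordb_sum_def)

lemma ordb_sum_map_upt: "ordb_sum b (map a [0..<k]) y = (\<Sum>j<k. ordb b (y - a j))"
  by (induction k) (simp_all add: add.commute)

inductive b_ordering_list :: "nat \<Rightarrow> int set \<Rightarrow> int list \<Rightarrow> bool" for b U where
  Nil: "b_ordering_list b U []"
| snoc: "b_ordering_list b U L \<Longrightarrow> x \<in> U \<Longrightarrow> (\<forall>y\<in>U. ordb_sum b L x \<le> ordb_sum b L y)
    \<Longrightarrow> b_ordering_list b U (L @ [x])"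

lemma b_ordering_list_snoc_iff:
  "b_ordering_list b U (L @ [x]) \<longleftrightarrow>
     b_ordering_list b U L \<and> x \<in> U \<and> (\<forall>y\<in>U. ordb_sum b L x \<le> ordb_sum b L y)"
  by (auto elim: b_ordering_list.cases intro: b_ordering_list.snoc)

lemma b_ordering_list_set: "b_ordering_list b U L \<Longrightarrow> set L \<subseteq> U"
  by (induction rule: b_ordering_list.induct) auto

lemma b_ordering_list_take: "b_ordering_list b U L \<Longrightarrow> b_ordering_list b U (take n L)"
  by (induction rule: b_ordering_list.induct) (auto intro: b_ordering_list.intros simp: take_Cons')

lemma b_ordering_list_subset:
  "b_ordering_list b U L \<Longrightarrow> set L \<subseteq> V \<Longrightarrow> V \<subseteq> U \<Longrightarrow> b_ordering_list b V L"
  by (induction rule: b_ordering_list.induct) (auto intro: b_ordering_list.intros)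

lemma b_ordering_list_map_upt:
  assumes "is_b_ordering S b a"
  shows "b_ordering_list b S (map a [0..<n])"
proof (induction n)
  case 0
  show ?case
    by (simp add: b_ordering_list.Nil)
next
  case (Suc n)
  have "ordb_sum b (map a [0..<n]) (a n) \<le> ordb_sum b (map a [0..<n]) y" if "y \<in> S" for y
  proof (cases "n = 0")
    case False
    then have "1 \<le> n"
      by simp
    then show ?thesis
      using assms that unfolding is_b_ordering_def ordb_sum_map_upt by blast
  qed simp
  moreover have "a n \<in> S"
    using assms by (simp add: is_b_ordering_def)
  ultimately show ?case
    using Suc by (auto intro: b_ordering_list.snoc)
qed

inductive ordb_sums_bounded :: "nat \<Rightarrow> enat \<Rightarrow> int list \<Rightarrow> bool" for b t where
  Nil: "ordb_sums_bounded b t []"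
| snoc: "ordb_sums_bounded b t L \<Longrightarrow> ordb_sum b L x \<le> t \<Longrightarrow> ordb_sums_bounded b t (L @ [x])"

lemma ordb_sums_bounded_snoc_iff:
  "ordb_sums_bounded b t (L @ [x]) \<longleftrightarrow> ordb_sums_bounded b t L \<and> ordb_sum b L x \<le> t"
  by (auto elim: ordb_sums_bounded.cases intro: ordb_sums_bounded.snoc)

lemma ordb_sums_bounded_take: "ordb_sums_bounded b t L \<Longrightarrow> ordb_sums_bounded b t (take n L)"
  by (induction rule: ordb_sums_bounded.induct) (auto intro: ordb_sums_bounded.intros simp: take_Cons')

lemma ordb_sums_bounded_mono:
  "ordb_sums_bounded b t L \<Longrightarrow> t \<le> t' \<Longrightarrow> ordb_sums_bounded b t' L"
  by (induction rule: ordb_sums_bounded.induct) (auto intro: ordb_sums_bounded.intros)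

lemma ordb_sums_bounded_nth:
  assumes "ordb_sums_bounded b t L" "j < length L"
  shows "ordb_sum b (take j L) (L ! j) \<le> t"
proof -
  have "ordb_sums_bounded b t (take j L @ [L ! j])"
    using ordb_sums_bounded_take[OF assms(1), of "Suc j"] assms(2)
    by (simp add: take_Suc_conv_app_nth)
  then show ?thesis
    by (simp add: ordb_sums_bounded_snoc_iff)
qed

lemma b_ordering_list_ordb_sums_bounded:
  "b_ordering_list b U (L @ [z]) \<Longrightarrow> ordb_sums_bounded b (ordb_sum b L z) (L @ [z])"
proof (induction L arbitrary: z rule: rev_induct)
  case Nil
  then show ?case
    using ordb_sums_bounded.snoc[of b 0 "[]" z] by (simp add: ordb_sums_bounded.Nil)
next
  case (snoc x L)
  have "b_ordering_list b U ((L @ [x]) @ [z])"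
    using snoc.prems by simp
  then have ordering: "b_ordering_list b U (L @ [x])" and "z \<in> U"
    using b_ordering_list_snoc_iff[of b U "L @ [x]" z] by blast+
  then have "ordb_sum b L x \<le> ordb_sum b L z"
    by (auto simp: b_ordering_list_snoc_iff)
  also have "\<dots> \<le> ordb_sum b (L @ [x]) z"
    by simp
  finally have "ordb_sums_bounded b (ordb_sum b (L @ [x]) z) (L @ [x])"
    using ordb_sums_bounded_mono snoc.IH[OF ordering] by blast
  then have "ordb_sums_bounded b (ordb_sum b (L @ [x]) z) ((L @ [x]) @ [z])"
    by (rule ordb_sums_bounded.snoc) simp
  then show ?case
    by simp
qed

lemma ordb_sum_filter_residue:
  assumes "y mod int b = r"
  shows "ordb_sum b (filter (\<lambda>x. x mod int b = r) L) y = ordb_sum b L y"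
proof (induction L)
  case (Cons x L)
  have "ordb b (y - x) = 0" if "x mod int b \<noteq> r"
    using that assms by (simp add: ordb_eq_0_iff mod_eq_dvd_iff[symmetric])
  with Cons show ?case
    by simp
qed simp

lemma b_ordering_list_filter_residue:
  "b_ordering_list b U L \<Longrightarrow>
     b_ordering_list b {x\<in>U. x mod int b = r} (filter (\<lambda>x. x mod int b = r) L)"
  by (induction rule: b_ordering_list.induct)
    (auto intro!: b_ordering_list.intros simp: ordb_sum_filter_residue)

lemma ordb_sums_bounded_filter_residue:
  "ordb_sums_bounded b t L \<Longrightarrow> ordb_sums_bounded b t (filter (\<lambda>x. x mod int b = r) L)"
  by (induction rule: ordb_sums_bounded.induct)
    (auto intro!: ordb_sums_bounded.intros simp: ordb_sum_filter_residue)

lemma b_ordering_list_take_filter_residue: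
  fixes n :: nat and r :: int
  assumes "b_ordering_list b U L"
  defines "L' \<equiv> take n (filter (\<lambda>x. x mod int b = r) L)"
  shows "b_ordering_list b (set L') L'"
proof -
  have "b_ordering_list b {x\<in>U. x mod int b = r} L'"
    unfolding L'_def by (rule b_ordering_list_take[OF b_ordering_list_filter_residue[OF assms(1)]])
  then show ?thesis
    by (rule b_ordering_list_subset)
      (use b_ordering_list_set[OF assms(1)] set_take_subset[of n "filter (\<lambda>x. x mod int b = r) L"]
        in \<open>auto simp: L'_def\<close>)
qed

lemma ordb_sum_filter_residue_nth_le:
  fixes r :: int
  assumes "b_ordering_list b U (A @ [z])"
  defines "Ar \<equiv> filter (\<lambda>x. x mod int b = r) (A @ [z])"
  assumes "j < length Ar"
  shows "ordb_sum b (take j Ar) (Ar ! j) \<le> ordb_sum b A z"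
proof -
  have "ordb_sums_bounded b (ordb_sum b A z) Ar"
    unfolding Ar_def
    by (rule ordb_sums_bounded_filter_residue[OF b_ordering_list_ordb_sums_bounded[OF assms(1)]])
  then show ?thesis
    using assms(3) by (rule ordb_sums_bounded_nth)
qed

lemma ordb_sum_rescale:
  assumes "b \<noteq> 0" "\<forall>x\<in>set L. int b dvd x - c" "int b dvd y - c"
  defines "f \<equiv> \<lambda>x. (x - c) div int b"
  shows "ordb_sum b L y = of_nat (length L) + ordb_sum b (map f L) (f y)"
  using assms(2)
proof (induction L)
  case (Cons x L)
  have "y - x = int b * (f y - f x)"
    using Cons.prems assms(3) by (auto simp: f_def algebra_simps elim!: dvdE)
  then have "ordb b (y - x) = eSuc (ordb b (f y - f x))"
    using ordb_mult_self[OF assms(1)] by simp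
  with Cons show ?case
    by (simp add: eSuc_plus_1 algebra_simps)
qed simp

lemma b_ordering_list_rescale:
  assumes "b \<noteq> 0" "\<forall>x\<in>U. int b dvd x - c" "b_ordering_list b U L"
  defines "f \<equiv> \<lambda>x. (x - c) div int b"
  shows "b_ordering_list b (f ` U) (map f L)"
  using assms(3)
proof (induction rule: b_ordering_list.induct)
  case Nil
  show ?case
    by (simp add: b_ordering_list.Nil)
next
  case (snoc L x)
  have "set L \<subseteq> U"
    using b_ordering_list_set[OF snoc.hyps(1)] .
  have "ordb_sum b (map f L) (f x) \<le> ordb_sum b (map f L) (f y)" if "y \<in> U" for y
  proof -
    have divisible: "\<forall>x\<in>set L. int b dvd x - c" "int b dvd x - c" "int b dvd y - c"
      using \<open>set L \<subseteq> U\<close> assms(2) snoc.hyps(2) that by auto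
    have "ordb_sum b L x \<le> ordb_sum b L y"
      using snoc.hyps(3) that by blast
    then have "of_nat (length L) + ordb_sum b (map f L) (f x)
        \<le> of_nat (length L) + ordb_sum b (map f L) (f y)"
      using divisible by (simp add: ordb_sum_rescale[OF assms(1)] f_def)
    then show ?thesis
      by (simp add: of_nat_eq_enat enat_add_left_cancel_le)
  qed
  with snoc show ?case
    by (auto intro!: b_ordering_list.snoc)
qed

section \<open>Comparing b-ordered lists\<close>

text \<open>With C = c_0..c_{k-1} and A @ [z] = a_0..a_k, this is the claim proved by induction on T.\<close>

definition b_ordering_comparison :: "nat \<Rightarrow> int set \<Rightarrow> bool" where
  "b_ordering_comparison b T \<longleftrightarrow>
     (\<forall>C A z. b_ordering_list b T C \<longrightarrow> b_ordering_list b (set (A @ [z])) (A @ [z]) \<longrightarrow>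
        set (A @ [z]) \<subseteq> T \<longrightarrow> length A = length C \<longrightarrow>
        (\<exists>y\<in>set (A @ [z]). ordb_sum b C y \<le> ordb_sum b A z))"

lemma b_ordering_comparison_subsingleton:
  assumes "T \<subseteq> {c}"
  shows "b_ordering_comparison b T"
  unfolding b_ordering_comparison_def
proof (intro allI impI)
  fix C A z
  assume "b_ordering_list b T C" "set (A @ [z]) \<subseteq> T" "length A = length C"
  then have "set C \<subseteq> {c}" "set A \<subseteq> {c}"
    using b_ordering_list_set[of b T C] assms by auto
  then have "C = A"
    using \<open>length A = length C\<close> by (metis replicate_eqI singletonD subsetD)
  then show "\<exists>y\<in>set (A @ [z]). ordb_sum b C y \<le> ordb_sum b A z"
    by auto
qed

lemma b_ordering_comparison_residue_classes:
  assumes "u \<in> T" "v \<in> T" "u mod int b \<noteq> v mod int b"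
    and smaller: "\<And>T'. T' \<subset> T \<Longrightarrow> b_ordering_comparison b T'"
  shows "b_ordering_comparison b T"
  unfolding b_ordering_comparison_def
proof (intro allI impI)
  fix C A z
  assume C: "b_ordering_list b T C" and A: "b_ordering_list b (set (A @ [z])) (A @ [z])"
    and AT: "set (A @ [z]) \<subseteq> T" and len: "length A = length C"
  have "length C < length (A @ [z])"
    using len by simp
  then obtain r where r: "length (filter (\<lambda>x. x mod int b = r) C)
      < length (filter (\<lambda>x. x mod int b = r) (A @ [z]))"
    using ex_length_filter_less[where f = "\<lambda>x. x mod int b"] by blast
  define Tr where "Tr = {x\<in>T. x mod int b = r}"
  define Cr where "Cr = filter (\<lambda>x. x mod int b = r) C"
  define Ar where "Ar = filter (\<lambda>x. x mod int b = r) (A @ [z])"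
  define j where "j = length Cr"
  have j: "j < length Ar"
    using r unfolding j_def Cr_def Ar_def .
  then have Ar_prefix: "take (Suc j) Ar = take j Ar @ [Ar ! j]"
    by (rule take_Suc_conv_app_nth)
  have "u \<notin> Tr \<or> v \<notin> Tr"
    using assms(3) by (auto simp: Tr_def)
  then have "Tr \<subset> T"
    using assms(1,2) by (auto simp: Tr_def)
  have Cr_ordering: "b_ordering_list b Tr Cr"
    using b_ordering_list_filter_residue[OF C] by (simp add: Tr_def Cr_def)
  have prefix_ordering: "b_ordering_list b (set (take j Ar @ [Ar ! j])) (take j Ar @ [Ar ! j])"
    using b_ordering_list_take_filter_residue[OF A, of "Suc j" r]
    unfolding Ar_def[symmetric] Ar_prefix .
  have "set (take (Suc j) Ar) \<subseteq> Tr"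
    using AT set_take_subset[of "Suc j" Ar] by (auto simp: Ar_def Tr_def)
  then have prefix_in_Tr: "set (take j Ar @ [Ar ! j]) \<subseteq> Tr"
    by (simp only: Ar_prefix)
  have "length (take j Ar) = length Cr"
    using j by (simp add: j_def)
  then obtain y where y: "y \<in> set (take j Ar @ [Ar ! j])"
    and y_le: "ordb_sum b Cr y \<le> ordb_sum b (take j Ar) (Ar ! j)"
    using smaller[OF \<open>Tr \<subset> T\<close>] Cr_ordering prefix_ordering prefix_in_Tr
    unfolding b_ordering_comparison_def by blast
  then have "y \<in> set Ar"
    by (metis Ar_prefix in_set_takeD)
  then have "y \<in> set (A @ [z])" and "y mod int b = r"
    unfolding Ar_def set_filter by simp_all
  have "ordb_sum b C y = ordb_sum b Cr y"
    using ordb_sum_filter_residue[OF \<open>y mod int b = r\<close>] by (simp add: Cr_def)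
  also have "\<dots> \<le> ordb_sum b (take j Ar) (Ar ! j)"
    by (fact y_le)
  also have "\<dots> \<le> ordb_sum b A z"
    using ordb_sum_filter_residue_nth_le[OF A] j by (simp add: Ar_def)
  finally show "\<exists>y\<in>set (A @ [z]). ordb_sum b C y \<le> ordb_sum b A z"
    using \<open>y \<in> set (A @ [z])\<close> by blast
qed

lemma b_ordering_comparison_rescale:
  assumes "b \<noteq> 0" "\<forall>x\<in>T. int b dvd x - c"
    and rescaled: "b_ordering_comparison b ((\<lambda>x. (x - c) div int b) ` T)"
  shows "b_ordering_comparison b T"
  unfolding b_ordering_comparison_def
proof (intro allI impI)
  define f where "f = (\<lambda>x. (x - c) div int b)"
  fix C A z
  assume C: "b_ordering_list b T C" and A: "b_ordering_list b (set (A @ [z])) (A @ [z])"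
    and AT: "set (A @ [z]) \<subseteq> T" and len: "length A = length C"
  have "b_ordering_list b (f ` T) (map f C)"
    using b_ordering_list_rescale[OF assms(1,2) C] by (simp add: f_def)
  moreover have "b_ordering_list b (set (map f A @ [f z])) (map f A @ [f z])"
    using b_ordering_list_rescale[OF assms(1) _ A, of c] assms(2) AT
    by (auto simp: f_def image_Un)
  moreover have "set (map f A @ [f z]) \<subseteq> f ` T"
    using AT by auto
  moreover have "length (map f A) = length (map f C)"
    using len by simp
  ultimately obtain y' where "y' \<in> set (map f A @ [f z])"
    and "ordb_sum b (map f C) y' \<le> ordb_sum b (map f A) (f z)"
    using rescaled unfolding b_ordering_comparison_def f_def[symmetric] by blast
  then obtain y where y: "y \<in> set (A @ [z])"
    and y_le: "ordb_sum b (map f C) (f y) \<le> ordb_sum b (map f A) (f z)"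
    by auto
  have divisible: "\<forall>x\<in>set C. int b dvd x - c" "\<forall>x\<in>set A. int b dvd x - c"
    "int b dvd y - c" "int b dvd z - c"
    using assms(2) b_ordering_list_set[OF C] AT y by auto
  have "ordb_sum b C y = of_nat (length C) + ordb_sum b (map f C) (f y)"
    using ordb_sum_rescale[OF assms(1)] divisible by (simp add: f_def)
  also have "\<dots> \<le> of_nat (length A) + ordb_sum b (map f A) (f z)"
    using y_le len by (simp add: add_left_mono)
  also have "\<dots> = ordb_sum b A z"
    using ordb_sum_rescale[OF assms(1)] divisible by (simp add: f_def)
  finally show "\<exists>y\<in>set (A @ [z]). ordb_sum b C y \<le> ordb_sum b A z"
    using y by blast
qed

text \<open>For b = 1 the rescaling step would not shrink the diameter; this is why b \<noteq> 1 is assumed.\<close>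

lemma b_ordering_comparison_finite:
  assumes "b \<noteq> 1" "finite T"
  shows "b_ordering_comparison b T"
proof -
  obtain n where "\<forall>x\<in>T. \<forall>y\<in>T. \<bar>x - y\<bar> \<le> int n"
    using finite_int_set_diameter[OF assms(2)] .
  with assms(2) show ?thesis
  proof (induction n arbitrary: T rule: less_induct)
    case (less n T)
    from less.prems show ?case
    proof (induction T rule: finite_psubset_induct)
      case (psubset T)
      show ?case
      proof (cases rule: int_set_residue_cases[of T b])
        case (residues u v)
        show ?thesis
        proof (rule b_ordering_comparison_residue_classes[OF residues])
          fix T' assume "T' \<subset> T"
          then have "\<forall>x\<in>T'. \<forall>y\<in>T'. \<bar>x - y\<bar> \<le> int n"
            using psubset.prems by blast
          then show "b_ordering_comparison b T'"
            using psubset.IH[OF \<open>T' \<subset> T\<close>] by blast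
        qed
      next
        case (subsingleton c)
        then show ?thesis
          by (rule b_ordering_comparison_subsingleton)
      next
        case (congruent u v)
        define f where "f = (\<lambda>x. (x - u) div int b)"
        have "b \<noteq> 0"
          using congruent(2-4) by (metis mod_by_0 of_nat_0)
        have "0 < n"
          using psubset.prems congruent(1-3) by fastforce
        with \<open>b \<noteq> 0\<close> assms(1) have "n div b < n"
          by simp
        have divisible: "\<forall>x\<in>T. int b dvd x - u"
          using congruent by (simp add: mod_eq_dvd_iff)
        then have "\<forall>x\<in>f ` T. \<forall>y\<in>f ` T. \<bar>x - y\<bar> \<le> int (n div b)"
          using psubset.prems by (auto simp: f_def intro: abs_diff_rescale_le)
        then have "b_ordering_comparison b (f ` T)"
          using less.IH[OF \<open>n div b < n\<close>] psubset.hyps by blast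
        then show ?thesis
          using b_ordering_comparison_rescale[OF \<open>b \<noteq> 0\<close> divisible] by (simp add: f_def)
      qed
    qed
  qed
qed

lemma b_ordering_list_last_antimono:
  assumes "b \<noteq> 1" "S1 \<subseteq> S2"
    and A: "b_ordering_list b S1 (A @ [z])" and C: "b_ordering_list b S2 (C @ [c])"
    and len: "length A = length C"
  shows "ordb_sum b C c \<le> ordb_sum b A z"
proof -
  define T where "T = set C \<union> set (A @ [z])"
  have "b_ordering_comparison b T"
    by (rule b_ordering_comparison_finite[OF assms(1)]) (simp add: T_def)
  moreover have "b_ordering_list b T C"
  proof (rule b_ordering_list_subset)
    show "b_ordering_list b S2 C"
      using C by (simp add: b_ordering_list_snoc_iff)
    show "T \<subseteq> S2"
      using b_ordering_list_set[OF C] b_ordering_list_set[OF A] assms(2) by (auto simp: T_def)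
  qed (auto simp: T_def)
  moreover have "b_ordering_list b (set (A @ [z])) (A @ [z])"
    by (rule b_ordering_list_subset[OF A order_refl b_ordering_list_set[OF A]])
  moreover have "set (A @ [z]) \<subseteq> T"
    unfolding T_def by (rule Un_upper2)
  ultimately obtain y where y: "y \<in> set (A @ [z])" "ordb_sum b C y \<le> ordb_sum b A z"
    using len unfolding b_ordering_comparison_def by blast
  have "ordb_sum b C c \<le> ordb_sum b C y"
    using C y(1) b_ordering_list_set[OF A] assms(2) by (auto simp: b_ordering_list_snoc_iff)
  also note y(2)
  finally show ?thesis .
qed

section \<open>The b-exponent sequence and generalised factorials\<close>

lemma b_ordering_exists:
  assumes "S \<noteq> {}"
  shows "\<exists>a. is_b_ordering S b a"
proof -
  have "\<forall>L. \<exists>x. x \<in> S \<and> (\<forall>y\<in>S. ordb_sum b L x \<le> ordb_sum b L y)"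
    using ex_minimizer[OF assms] by blast
  then obtain next_elem where next_elem: "\<And>L. next_elem L \<in> S"
    "\<And>L y. y \<in> S \<Longrightarrow> ordb_sum b L (next_elem L) \<le> ordb_sum b L y"
    using choice[of "\<lambda>L x. x \<in> S \<and> (\<forall>y\<in>S. ordb_sum b L x \<le> ordb_sum b L y)"] by blast
  define prefix where "prefix = rec_nat [] (\<lambda>_ L. L @ [next_elem L])"
  define a where "a n = next_elem (prefix n)" for n
  have "prefix n = map a [0..<n]" for n
    by (induction n) (simp_all add: prefix_def a_def)
  then have a_step: "next_elem (map a [0..<i]) = a i" for i
    by (simp add: a_def)
  have "is_b_ordering S b a"
    unfolding is_b_ordering_def
  proof (intro conjI allI impI ballI)
    show "a i \<in> S" for i
      by (simp add: a_def next_elem(1))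
    show "(\<Sum>j<i. ordb b (a i - a j)) \<le> (\<Sum>j<i. ordb b (y - a j))" if "y \<in> S" for i y
      using next_elem(2)[OF that, of "map a [0..<i]"] unfolding a_step ordb_sum_map_upt .
  qed
  then show ?thesis
    by blast
qed

lemma alpha_b_ordering:
  assumes "S \<noteq> {}"
  obtains a where "is_b_ordering S b a" "\<And>k. alpha S b k = (\<Sum>j<k. ordb b (a k - a j))"
proof -
  define a where "a = (SOME a. is_b_ordering S b a)"
  have "is_b_ordering S b a"
    unfolding a_def using b_ordering_exists[OF assms] by (rule someI_ex)
  moreover have "alpha S b k = (\<Sum>j<k. ordb b (a k - a j))" for k
    by (simp add: alpha_def a_def Let_def)
  ultimately show thesis
    using that by blast
qed

lemma alpha_antimono:
  assumes "b \<noteq> 1" "S1 \<noteq> {}" "S1 \<subseteq> S2"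
  shows "alpha S2 b k \<le> alpha S1 b k"
proof -
  obtain a where a: "is_b_ordering S1 b a" "alpha S1 b k = (\<Sum>j<k. ordb b (a k - a j))"
    using alpha_b_ordering[OF assms(2)] by metis
  obtain c where c: "is_b_ordering S2 b c" "alpha S2 b k = (\<Sum>j<k. ordb b (c k - c j))"
    using alpha_b_ordering[of S2] assms(2,3) by blast
  have "alpha S2 b k = ordb_sum b (map c [0..<k]) (c k)"
    by (simp add: c(2) ordb_sum_map_upt)
  also have "\<dots> \<le> ordb_sum b (map a [0..<k]) (a k)"
    using b_ordering_list_map_upt[OF a(1), of "Suc k"] b_ordering_list_map_upt[OF c(1), of "Suc k"]
    by (intro b_ordering_list_last_antimono[OF assms(1,3)]) simp_all
  also have "\<dots> = alpha S1 b k"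
    by (simp add: a(2) ordb_sum_map_upt)
  finally show ?thesis .
qed

lemma alpha_eq_0_if_incongruent:
  assumes "F \<subseteq> S" "card F = Suc k"
    and incongruent: "\<And>x y. x \<in> F \<Longrightarrow> y \<in> F \<Longrightarrow> int b dvd x - y \<Longrightarrow> x = y"
  shows "alpha S b k = 0"
proof -
  have "finite F"
    using assms(2) by (intro card_ge_0_finite) simp
  have "S \<noteq> {}"
    using assms(1,2) by auto
  obtain a where a: "is_b_ordering S b a" "alpha S b k = (\<Sum>j<k. ordb b (a k - a j))"
    using alpha_b_ordering[OF \<open>S \<noteq> {}\<close>] by metis
  define hit where "hit j = {y\<in>F. int b dvd y - a j}" for j
  have "card (hit j) \<le> 1" for j
  proof -
    have "y1 = y2" if "y1 \<in> hit j" "y2 \<in> hit j" for y1 y2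
    proof -
      have "int b dvd (y1 - a j) - (y2 - a j)"
        using that dvd_diff[of "int b" "y1 - a j" "y2 - a j"] by (simp add: hit_def)
      then show ?thesis
        using that incongruent by (auto simp: hit_def)
    qed
    then show ?thesis
      using \<open>finite F\<close> by (auto simp: card_le_Suc0_iff_eq hit_def)
  qed
  then have "card (\<Union>j<k. hit j) \<le> k"
    using card_UN_le[of "{..<k}" hit] sum_mono[of "{..<k}" "\<lambda>j. card (hit j)" "\<lambda>_. 1"] by simp
  with assms(2) \<open>finite F\<close> have "\<not> F \<subseteq> (\<Union>j<k. hit j)"
    using card_mono[of "\<Union>j<k. hit j" F] by (auto simp: hit_def)
  then obtain y where "y \<in> F" "\<And>j. j < k \<Longrightarrow> \<not> int b dvd y - a j"
    by (auto simp: hit_def)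
  then have y_sum: "(\<Sum>j<k. ordb b (y - a j)) = 0"
    by (simp add: ordb_eq_0_iff)
  show ?thesis
  proof (cases "k = 0")
    case False
    then have "alpha S b k \<le> (\<Sum>j<k. ordb b (y - a j))"
      using a \<open>y \<in> F\<close> assms(1) by (auto simp: is_b_ordering_def)
    with y_sum show ?thesis
      by simp
  qed (use a(2) in simp)
qed

lemma epow_0_right [simp]: "epow b 0 = 1"
  by (simp add: epow_def zero_enat_def)

lemma epow_1_left [simp]: "epow 1 e = 1"
  by (cases e) (simp_all add: epow_def)

lemma epow_dvd_epow: "e \<le> e' \<Longrightarrow> epow b e dvd epow b e'"
  by (cases e; cases e') (auto simp: epow_def le_imp_power_dvd)

lemma finite_nontrivial_epow_alpha:
  assumes "finite S \<longrightarrow> k < card S"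
  shows "finite {b\<in>T. epow b (alpha S b k) \<noteq> 1}"
proof -
  obtain F where F: "F \<subseteq> S" "card F = Suc k"
    using ex_subset_card[of S "Suc k"] assms by (metis Suc_leI)
  then obtain n where n: "\<forall>x\<in>F. \<forall>y\<in>F. \<bar>x - y\<bar> \<le> int n"
    using finite_int_set_diameter card_ge_0_finite by (metis zero_less_Suc)
  have vanish: "alpha S b k = 0" if "n < b" for b
  proof (rule alpha_eq_0_if_incongruent[OF F])
    fix x y assume "x \<in> F" "y \<in> F" "int b dvd x - y"
    then show "x = y"
      using n that dvd_imp_le_int[of "x - y" "int b"] by fastforce
  qed
  have "b \<le> n" if "epow b (alpha S b k) \<noteq> 1" for b
  proof (rule ccontr)
    assume "\<not> b \<le> n"
    then have "alpha S b k = 0"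
      by (simp add: vanish)
    with that show False
      by simp
  qed
  then have "{b\<in>T. epow b (alpha S b k) \<noteq> 1} \<subseteq> {..n}"
    by auto
  then show ?thesis
    using finite_subset by blast
qed

lemma epow_alpha_dvd:
  assumes "S1 \<noteq> {}" "S1 \<subseteq> S2"
  shows "epow b (alpha S2 b k) dvd epow b (alpha S1 b k)"
proof (cases "b = 1")
  case True
  show ?thesis
    unfolding True epow_1_left by (rule dvd_refl)
qed (simp add: assms epow_dvd_epow alpha_antimono)

theorem proposition3p10:
  shows "(\<forall>(S::int set) (T1::nat set) T2 (k::nat).
            S \<noteq> {} \<and> T1 \<subseteq> T2 \<and> (finite S \<longrightarrow> k < card S)
              \<longrightarrow> gfact S T1 k dvd gfact S T2 k)
       \<and> (\<forall>(S1::int set) S2 (T::nat set) (k::nat).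
            S1 \<noteq> {} \<and> S1 \<subseteq> S2 \<and> (finite S1 \<longrightarrow> k < card S1)
              \<longrightarrow> gfact S2 T k dvd gfact S1 T k)"
proof (intro conjI allI impI)
  fix S :: "int set" and T1 T2 :: "nat set" and k :: nat
  assume "S \<noteq> {} \<and> T1 \<subseteq> T2 \<and> (finite S \<longrightarrow> k < card S)"
  then show "gfact S T1 k dvd gfact S T2 k"
    unfolding gfact_def by (intro prod_nontrivial_dvd finite_nontrivial_epow_alpha) auto
next
  fix S1 S2 :: "int set" and T :: "nat set" and k :: nat
  assume "S1 \<noteq> {} \<and> S1 \<subseteq> S2 \<and> (finite S1 \<longrightarrow> k < card S1)"
  then show "gfact S2 T k dvd gfact S1 T k"
    unfolding gfact_def by (intro prod_nontrivial_dvd finite_nontrivial_epow_alpha epow_alpha_dvd) auto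
qed

end
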